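(* Let $m\ge2$ be even and let $E_{\mathrm{hsc},m}$ be the $m\times 2$ matrix whose $j$-th row is $(\cos(j\pi/m),\sin(j\pi/m))$, $j=1,\dots,m$. Then for every integer $L\ge2$, $$\mathscr D_{\mathrm a}(E_{\mathrm{hsc},m},L)<\sqrt{2e}\,m\,L^{-m/2}.$$
   Context: For a $k\times m$ matrix $F$, finite $\mathscr A\subset\mathbb{R}$ and bounded $\mathscr X\subset\mathbb{R}^k$, $\mathscr D_{\mathrm s}(F,\mathscr A,\mathscr X):=\sup_{x\in\mathscr X}\inf_{q\in\mathscr A^m}\|x-Fq\|_2$; for an $m\times k$ matrix $E$, $\mathscr D_{\mathrm a}(E,\mathscr A,\mathscr X):=\inf\{\mathscr D_{\mathrm s}(F,\mathscr A,\mathscr X):FE=I_k\}$; and $\mathscr D_{\mathrm a}(E,L):=\inf_{|\mathscr A|=L}\mathscr D_{\mathrm a}(E,\mathscr A,B_1)$ with $B_1$ the closed unit Euclidean ball of $\mathbb{R}^k$ (here $k=2$). *)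

theory Defs
  imports "HOL-Analysis.Analysis"
begin

text \<open>A k x m matrix F (here k = 2)
  is given by its m columns F j :: real^2 (j < m); an m x 2 matrix E by its m rows
  E j :: real^2 (j < m). Index j runs over 0..m-1 (paper: 1..m).\<close>

definition mat_vec :: "nat \<Rightarrow> (nat \<Rightarrow> real^2) \<Rightarrow> (nat \<Rightarrow> real) \<Rightarrow> real^2" where
  "mat_vec m F q = (\<Sum>j<m. q j *\<^sub>R F j)"

definition D_s :: "nat \<Rightarrow> (nat \<Rightarrow> real^2) \<Rightarrow> real set \<Rightarrow> (real^2) set \<Rightarrow> real" where
  "D_s m F A X = (SUP x\<in>X. INF q\<in>({..<m} \<rightarrow>\<^sub>E A). norm (x - mat_vec m F q))"

text \<open>F E = I_2, where F is 2 x m (columns F j) and E is m x 2 (rows E j).\<close>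
definition left_inverse :: "nat \<Rightarrow> (nat \<Rightarrow> real^2) \<Rightarrow> (nat \<Rightarrow> real^2) \<Rightarrow> bool" where
  "left_inverse m F E = (\<forall>a b. (\<Sum>j<m. F j $ a * E j $ b) = (if a = b then 1 else 0))"

definition D_a :: "nat \<Rightarrow> (nat \<Rightarrow> real^2) \<Rightarrow> real set \<Rightarrow> (real^2) set \<Rightarrow> real" where
  "D_a m E A X = (INF F\<in>{F. left_inverse m F E}. D_s m F A X)"

definition D_a_L :: "nat \<Rightarrow> (nat \<Rightarrow> real^2) \<Rightarrow> nat \<Rightarrow> real" where
  "D_a_L m E L = (INF A\<in>{A :: real set. finite A \<and> card A = L}. D_a m E A (cball 0 1))"

text \<open>E_hsc,m: j-th row (cos(j pi/m), sin(j pi/m)), j = 1..m (stored at index j-1).\<close>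
definition E_hsc :: "nat \<Rightarrow> nat \<Rightarrow> real^2" where
  "E_hsc m j = vector [cos (real (j + 1) * pi / real m), sin (real (j + 1) * pi / real m)]"

end

theory Submission
  imports Defs
begin

text \<open>
  Write m = 2n.  The rows of E_hsc,m come in pairs: row k + n is row k
  turned by a right angle.  For such an E and positive weights w_k, the 2 x m matrix F
  whose columns are w_k z / |z|^2 and w_k (rot90 z) / |z|^2, with z = \<Sum> w_k E_k, is a left
  inverse of E, and F q = (Y1 z + Y2 rot90 z) / |z|^2 with Y1 = \<Sum> w_k q_k,
  Y2 = \<Sum> w_k q_(k+n).  Taking w_k = L^k and the centred L-letter alphabet of step h,
  the sums Y1, Y2 range over an equispaced grid of L^n points (base-L expansion), so the
  two coordinates of a point x of the unit disc in the orthogonal frame (z, rot90 z) can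
  each be matched up to h/2.  With h = 4|z|/L^n this gives D_a(E,L) \<le> 2 sqrt 2 L^(-n),
  which is below sqrt(2e) m L^(-m/2).
\<close>

lemma norm_vec2: "norm (x::real^2) = sqrt ((x$1)^2 + (x$2)^2)"
  by (simp add: norm_vec_def L2_set_def sum_2)

lemma sum_lessThan_double:
  "sum f {..<n+(n::nat)} = sum f {..<n} + (\<Sum>k<n. f (k+n))"
proof -
  have "sum f {..<n+n} = sum f {0..<n} + sum f {0+n..<n+n}"
    using sum.atLeastLessThan_concat[of 0 n "n+n" f] by (simp add: atLeast0LessThan)
  then show ?thesis by (simp only: sum.shift_bounds_nat_ivl atLeast0LessThan)
qed

lemma base_expansion:
  fixes L N n :: nat
  assumes "N < L^n"
  shows "(\<Sum>k<n. L^k * (N div L^k mod L)) = N"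
  using assms
proof (induction n arbitrary: N)
  case 0 then show ?case by simp
next
  case (Suc n)
  have "N div L < L^n" using Suc.prems
    by (metis less_mult_imp_div_less mult.commute power_Suc)
  then have IH: "(\<Sum>k<n. L^k * (N div L div L^k mod L)) = N div L" by (rule Suc.IH)
  have "(\<Sum>k<Suc n. L^k * (N div L^k mod L)) = N mod L + L * (\<Sum>k<n. L^k * (N div L div L^k mod L))"
    unfolding sum.lessThan_Suc_shift by (simp add: sum_distrib_left div_mult2_eq mult.assoc)
  then show ?case using IH by simp
qed

definition centered_alphabet :: "nat \<Rightarrow> real \<Rightarrow> real set" where
  "centered_alphabet L h = (\<lambda>i. h * (real i - (real L - 1) / 2)) ` {..<L}"

lemma centered_alphabet_card:
  assumes "h \<noteq> 0"
  shows "finite (centered_alphabet L h)" "card (centered_alphabet L h) = L"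
  unfolding centered_alphabet_def using assms by (auto simp: card_image inj_on_def)

text \<open>One-dimensional quantisation: the numbers \<Sum>_(k<n) L^k a_k with digits a_k from the
  centred alphabet form the grid h (N - (L^n - 1)/2), N < L^n, so any t within the hull of
  that grid is approximated up to h/2.\<close>
lemma centered_digit_approx:
  fixes L n :: nat and h t :: real
  assumes "L \<ge> 1" and "h > 0" and "\<bar>t\<bar> \<le> h * (real L ^ n - 1) / 2"
  shows "\<exists>a. (\<forall>k<n. a k \<in> centered_alphabet L h) \<and> \<bar>t - (\<Sum>k<n. real L ^ k * a k)\<bar> \<le> h / 2"
proof -
  define P where "P = real L ^ n"
  define s where "s = t / h + (P - 1) / 2"
  have s_range: "0 \<le> s" "s \<le> P - 1"
    using assms(3) \<open>h > 0\<close> unfolding s_def P_def by (auto simp: abs_le_iff field_simps)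
  define N where "N = nat \<lfloor>s + 1/2\<rfloor>"
  have N_round: "\<bar>s - real N\<bar> \<le> 1/2"
    unfolding N_def using s_range by linarith
  have "real N < P" unfolding N_def using s_range by linarith
  then have N_lt: "N < L^n" unfolding P_def by (metis of_nat_less_iff of_nat_power)
  define a where "a k = h * (real (N div L^k mod L) - (real L - 1) / 2)" for k
  have digits: "\<forall>k<n. a k \<in> centered_alphabet L h"
    unfolding a_def centered_alphabet_def using assms(1) by auto
  have geometric: "(\<Sum>k<n. real L ^ k * (real L - 1)) = P - 1"
    unfolding P_def by (induction n) (auto simp: algebra_simps)
  have "(\<Sum>k<n. real L ^ k * a k)
      = h * (\<Sum>k<n. real L ^ k * real (N div L^k mod L)) - h/2 * (\<Sum>k<n. real L ^ k * (real L - 1))"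
    unfolding a_def sum_distrib_left sum_subtractf[symmetric] by (rule sum.cong) (auto simp: field_simps)
  also have "(\<Sum>k<n. real L ^ k * real (N div L^k mod L)) = real N"
    using arg_cong[OF base_expansion[OF N_lt], of real] by simp
  finally have grid_point: "(\<Sum>k<n. real L ^ k * a k) = h * (real N - (P - 1) / 2)"
    unfolding geometric by (simp add: algebra_simps)
  have "t - (\<Sum>k<n. real L ^ k * a k) = h * (s - real N)"
    unfolding grid_point s_def using \<open>h > 0\<close> by (simp add: field_simps)
  then have "\<bar>t - (\<Sum>k<n. real L ^ k * a k)\<bar> \<le> h / 2"
    using N_round \<open>h > 0\<close> by (simp add: abs_mult)
  with digits show ?thesis by blast
qed

definition rot90 :: "real^2 \<Rightarrow> real^2" where
  "rot90 v = vector [- v$2, v$1]"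

lemma rot90_nth [simp]: "rot90 v $ 1 = - v$2" "rot90 v $ 2 = v$1"
  by (simp_all add: rot90_def)

lemma linear_rot90: "linear rot90"
  by (rule linearI) (simp_all add: vec_eq_iff forall_2)

lemma norm_rot90_combination:
  "norm (a *\<^sub>R z + b *\<^sub>R rot90 z) = sqrt (a^2 + b^2) * norm z"
proof -
  have "(a * z$1 - b * z$2)^2 + (a * z$2 + b * z$1)^2 = (a^2 + b^2) * ((z$1)^2 + (z$2)^2)"
    by (simp add: power2_eq_square algebra_simps)
  then show ?thesis by (simp add: norm_vec2 real_sqrt_mult)
qed

lemma rot90_decomposition:
  "(norm z)^2 *\<^sub>R x = (z \<bullet> x) *\<^sub>R z + (rot90 z \<bullet> x) *\<^sub>R rot90 z"
  by (simp add: vec_eq_iff forall_2 inner_vec_def sum_2 norm_vec2 power2_eq_square algebra_simps)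

lemma frame_error:
  assumes "z \<noteq> 0"
  shows "norm (x - (1 / (norm z)^2) *\<^sub>R (Y1 *\<^sub>R z + Y2 *\<^sub>R rot90 z))
           = sqrt ((z \<bullet> x - Y1)^2 + (rot90 z \<bullet> x - Y2)^2) / norm z"
proof -
  have "x = (1 / (norm z)^2) *\<^sub>R ((z \<bullet> x) *\<^sub>R z + (rot90 z \<bullet> x) *\<^sub>R rot90 z)"
    unfolding rot90_decomposition[symmetric] using assms by simp
  then have "x - (1 / (norm z)^2) *\<^sub>R (Y1 *\<^sub>R z + Y2 *\<^sub>R rot90 z)
      = (1 / (norm z)^2) *\<^sub>R ((z \<bullet> x - Y1) *\<^sub>R z + (rot90 z \<bullet> x - Y2) *\<^sub>R rot90 z)"
    by (simp only: scaleR_diff_right[symmetric] scaleR_diff_left) (simp add: algebra_simps)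
  then show ?thesis
    using assms by (simp add: norm_rot90_combination power2_eq_square)
qed

lemma rot90_outer_product:
  "z$a * z$b + rot90 z$a * rot90 z$b = (if a = b then (norm z)^2 else 0)"
  using exhaust_2[of a] exhaust_2[of b] by (auto simp: norm_vec2 power2_eq_square)

definition pair_inverse :: "nat \<Rightarrow> (nat \<Rightarrow> real) \<Rightarrow> real^2 \<Rightarrow> nat \<Rightarrow> real^2" where
  "pair_inverse n w z j =
     (if j < n then (w j / (norm z)^2) *\<^sub>R z else (w (j - n) / (norm z)^2) *\<^sub>R rot90 z)"

lemma pair_inverse_left_inverse:
  assumes rot: "\<And>k. k < n \<Longrightarrow> E (k + n) = rot90 (E k)"
    and z: "z = (\<Sum>k<n. w k *\<^sub>R E k)" "z \<noteq> 0"
  shows "left_inverse (n + n) (pair_inverse n w z) E"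
  unfolding left_inverse_def
proof (intro allI)
  fix a b :: 2
  let ?F = "pair_inverse n w z"
  have rot_sum: "rot90 z = (\<Sum>k<n. w k *\<^sub>R rot90 (E k))"
    unfolding z(1) linear_sum[OF linear_rot90] linear_cmul[OF linear_rot90] ..
  have "(\<Sum>j<n + n. ?F j $ a * E j $ b)
      = (\<Sum>k<n. w k / (norm z)^2 * (z$a * E k $ b + rot90 z $ a * rot90 (E k) $ b))"
    unfolding sum_lessThan_double sum.distrib[symmetric]
    by (rule sum.cong) (simp_all add: pair_inverse_def rot algebra_simps)
  also have "\<dots> = (z$a * (\<Sum>k<n. w k * E k $ b) + rot90 z$a * (\<Sum>k<n. w k * rot90 (E k) $ b)) / (norm z)^2"
    by (simp add: sum_distrib_left sum_divide_distrib add_divide_distrib sum.distrib algebra_simps)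
  also have "\<dots> = (z$a * z$b + rot90 z$a * rot90 z$b) / (norm z)^2"
    using z(1) rot_sum by simp
  also have "\<dots> = (if a = b then 1 else 0)"
    unfolding rot90_outer_product using z(2) by simp
  finally show "(\<Sum>j<n + n. ?F j $ a * E j $ b) = (if a = b then 1 else 0)" .
qed

lemma pair_inverse_mat_vec:
  "mat_vec (n + n) (pair_inverse n w z) q
     = (1 / (norm z)^2) *\<^sub>R ((\<Sum>k<n. w k * q k) *\<^sub>R z + (\<Sum>k<n. w k * q (k + n)) *\<^sub>R rot90 z)"
proof -
  have "mat_vec (n + n) (pair_inverse n w z) q
      = (\<Sum>k<n. (1 / (norm z)^2) *\<^sub>R ((w k * q k) *\<^sub>R z + (w k * q (k + n)) *\<^sub>R rot90 z))"
    unfolding mat_vec_def sum_lessThan_double sum.distrib[symmetric]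
    by (rule sum.cong) (simp_all add: pair_inverse_def scaleR_add_right mult.commute)
  then show ?thesis
    by (simp only: scaleR_sum_right[symmetric] sum.distrib scaleR_sum_left)
qed

lemma pair_inverse_covers_ball:
  fixes n L :: nat
  assumes "n \<ge> 1" and "L \<ge> 2" and "z \<noteq> 0" and "norm x \<le> 1"
  defines "h \<equiv> 4 * norm z / real L ^ n"
  shows "\<exists>q\<in>{..<n + n} \<rightarrow>\<^sub>E centered_alphabet L h.
           norm (x - mat_vec (n + n) (pair_inverse n (\<lambda>k. real L ^ k) z) q) \<le> 2 * sqrt 2 / real L ^ n"
proof -
  define P where "P = real L ^ n"
  have "2 \<le> real L ^ 1" using assms(2) by simp
  also have "\<dots> \<le> real L ^ n" using assms(1,2) by (intro power_increasing) simp_all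
  finally have P2: "P \<ge> 2" unfolding P_def .
  have h_pos: "h > 0" unfolding h_def using assms(2,3) by (intro divide_pos_pos) simp_all
  define t1 where "t1 = z \<bullet> x"
  define t2 where "t2 = rot90 z \<bullet> x"
  have norm_rot: "norm (rot90 z) = norm z"
    using norm_rot90_combination[of 0 z 1] by simp
  have "norm z = h * P / 4" unfolding h_def P_def using assms(2) by simp
  also have "\<dots> \<le> h * (P - 1) / 2" using P2 h_pos by (simp add: field_simps)
  finally have z_bound: "norm z \<le> h * (P - 1) / 2" .
  have "norm z * norm x \<le> norm z" using assms(4) by (simp add: mult_left_le)
  then have t_bound: "\<bar>t1\<bar> \<le> h * (P - 1) / 2" "\<bar>t2\<bar> \<le> h * (P - 1) / 2"
    unfolding t1_def t2_def using Cauchy_Schwarz_ineq2[of z x] Cauchy_Schwarz_ineq2[of "rot90 z" x, unfolded norm_rot]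
      z_bound by linarith+
  have L1: "L \<ge> 1" using assms(2) by simp
  obtain a1 where
    a1: "\<forall>k<n. a1 k \<in> centered_alphabet L h" "\<bar>t1 - (\<Sum>k<n. real L ^ k * a1 k)\<bar> \<le> h / 2"
    using centered_digit_approx[OF L1 h_pos t_bound(1)[unfolded P_def]] by blast
  obtain a2 where
    a2: "\<forall>k<n. a2 k \<in> centered_alphabet L h" "\<bar>t2 - (\<Sum>k<n. real L ^ k * a2 k)\<bar> \<le> h / 2"
    using centered_digit_approx[OF L1 h_pos t_bound(2)[unfolded P_def]] by blast
  define q where "q = restrict (\<lambda>j. if j < n then a1 j else a2 (j - n)) {..<n + n}"
  have q_in: "q \<in> {..<n + n} \<rightarrow>\<^sub>E centered_alphabet L h"
    unfolding q_def using a1(1) a2(1) by auto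
  define d1 where "d1 = t1 - (\<Sum>k<n. real L ^ k * q k)"
  define d2 where "d2 = t2 - (\<Sum>k<n. real L ^ k * q (k + n))"
  have d_bound: "\<bar>d1\<bar> \<le> h / 2" "\<bar>d2\<bar> \<le> h / 2"
    unfolding d1_def d2_def q_def using a1(2) a2(2) by simp_all
  have "norm (x - mat_vec (n + n) (pair_inverse n (\<lambda>k. real L ^ k) z) q)
      = sqrt (d1^2 + d2^2) / norm z"
    unfolding pair_inverse_mat_vec d1_def d2_def t1_def t2_def using assms(3) by (rule frame_error)
  also have "\<dots> \<le> sqrt (2 * (h / 2)^2) / norm z"
    using d_bound power_mono[OF d_bound(1) abs_ge_zero, of 2] power_mono[OF d_bound(2) abs_ge_zero, of 2]
    by (intro divide_right_mono) simp_all
  also have "sqrt (2 * (h / 2)^2) = sqrt 2 * (h / 2)"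
    using h_pos by (simp add: real_sqrt_mult)
  also have "sqrt 2 * (h / 2) / norm z = 2 * sqrt 2 / P"
    unfolding h_def P_def using assms(3) by (simp add: field_simps)
  finally show ?thesis using q_in unfolding P_def by blast
qed

text \<open>D_s over the unit disc is a nonnegative supremum of infima (needed for the INF bounds).\<close>
lemma D_s_nonneg:
  assumes "A \<noteq> {}"
  shows "0 \<le> D_s m F A (cball 0 1)"
proof -
  let ?Q = "{..<m} \<rightarrow>\<^sub>E A"
  define g where "g x = (INF q\<in>?Q. norm (x - mat_vec m F q))" for x
  have Q_ne: "?Q \<noteq> {}" using assms by (simp add: PiE_eq_empty_iff)
  then obtain q0 where q0: "q0 \<in> ?Q" by blast
  have g_nonneg: "0 \<le> g x" for x
    unfolding g_def using Q_ne by (intro cINF_greatest) auto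
  have g_le: "g x \<le> norm (x - mat_vec m F q0)" for x
    unfolding g_def using q0 by (intro cINF_lower bdd_belowI2[where m=0]) simp_all
  have "bdd_above (g ` cball 0 1)"
  proof (rule bdd_aboveI[where M="1 + norm (mat_vec m F q0)"])
    fix y assume "y \<in> g ` cball 0 1"
    then obtain x where x: "norm x \<le> 1" "y = g x" by auto
    have "norm (x - mat_vec m F q0) \<le> norm x + norm (mat_vec m F q0)" by (rule norm_triangle_ineq4)
    then show "y \<le> 1 + norm (mat_vec m F q0)" using g_le[of x] x by simp
  qed
  then have "g 0 \<le> (SUP x\<in>cball 0 1. g x)" by (intro cSUP_upper) auto
  then show ?thesis using g_nonneg[of 0] unfolding D_s_def g_def by simp
qed

lemma D_s_le:
  assumes "\<And>x. x \<in> cball 0 1 \<Longrightarrow> \<exists>q\<in>{..<m} \<rightarrow>\<^sub>E A. norm (x - mat_vec m F q) \<le> B"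
  shows "D_s m F A (cball 0 1) \<le> B"
  unfolding D_s_def
proof (rule cSUP_least)
  fix x :: "real^2" assume "x \<in> cball 0 1"
  then obtain q where q: "q \<in> {..<m} \<rightarrow>\<^sub>E A" "norm (x - mat_vec m F q) \<le> B" using assms by blast
  have "(INF q\<in>{..<m} \<rightarrow>\<^sub>E A. norm (x - mat_vec m F q)) \<le> norm (x - mat_vec m F q)"
    using q(1) by (intro cINF_lower bdd_belowI2[where m=0]) simp_all
  then show "(INF q\<in>{..<m} \<rightarrow>\<^sub>E A. norm (x - mat_vec m F q)) \<le> B" using q(2) by linarith
qed simp

lemma D_a_L_le:
  assumes "finite A" and "card A = L" and "L \<ge> 1" and F: "left_inverse m F E"
    and cover: "\<And>x. x \<in> cball 0 1 \<Longrightarrow> \<exists>q\<in>{..<m} \<rightarrow>\<^sub>E A. norm (x - mat_vec m F q) \<le> B"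
  shows "D_a_L m E L \<le> B"
proof -
  have D_a_nonneg: "0 \<le> D_a m E A' (cball 0 1)" if "A' \<noteq> {}" for A'
    unfolding D_a_def using F by (intro cINF_greatest D_s_nonneg[OF that]) auto
  have "A \<noteq> {}" using assms(1-3) by auto
  then have "D_a m E A (cball 0 1) \<le> D_s m F A (cball 0 1)"
    unfolding D_a_def using F by (intro cINF_lower bdd_belowI2[where m=0] D_s_nonneg) simp_all
  also have "\<dots> \<le> B" using cover by (rule D_s_le)
  finally have "D_a m E A (cball 0 1) \<le> B" .
  moreover have "D_a_L m E L \<le> D_a m E A (cball 0 1)"
    unfolding D_a_L_def using assms(1-3)
    by (intro cINF_lower bdd_belowI2[where m=0] D_a_nonneg) auto
  ultimately show ?thesis by linarith
qed

lemma E_hsc_shift: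
  assumes "n \<ge> 1"
  shows "E_hsc (n + n) (k + n) = rot90 (E_hsc (n + n) k)"
proof -
  have "real (k + n + 1) * pi / real (n + n) = real (k + 1) * pi / real (n + n) + pi / 2"
    using assms by (simp add: field_simps)
  then show ?thesis unfolding E_hsc_def rot90_def by (simp add: cos_add sin_add)
qed

text \<open>The first n rows of E_hsc,2n lie in the open upper half plane (angles in (0, pi/2]).\<close>
lemma E_hsc_upper:
  assumes "k < n"
  shows "E_hsc (n + n) k $ 2 > 0"
proof -
  have "real (k + 1) * pi \<le> real n * pi" using assms by (intro mult_right_mono) auto
  then have upper: "real (k + 1) * pi / real (n + n) \<le> pi / 2"
    using assms by (simp add: field_simps)
  show ?thesis unfolding E_hsc_def vector_2
  proof (rule sin_gt_zero)
    show "0 < real (k + 1) * pi / real (n + n)" using assms by simp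
    show "real (k + 1) * pi / real (n + n) < pi" using upper pi_gt_zero by linarith
  qed
qed

lemma E_hsc_weighted_sum_nonzero:
  assumes "n \<ge> 1" and "\<And>k. w k > 0"
  shows "(\<Sum>k<n. w k *\<^sub>R E_hsc (n + n) k) \<noteq> 0"
proof -
  have "(\<Sum>k<n. w k *\<^sub>R E_hsc (n + n) k) $ 2 > 0"
    using assms E_hsc_upper by (simp, intro sum_pos) (auto simp: lessThan_empty_iff)
  then show ?thesis by (metis less_irrefl zero_index)
qed

lemma covering_radius_below_target:
  assumes "m \<ge> 2" and "m = n + n" and "L \<ge> 1"
  shows "2 * sqrt 2 / real L ^ n < sqrt (2 * exp 1) * real m * real L powr (- real m / 2)"
proof -
  have exponent: "- real m / 2 = - real n" using assms(2) by simp
  have "2 * sqrt 2 < 2 * sqrt (2 * exp 1)" by simp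
  also have "\<dots> \<le> real m * sqrt (2 * exp 1)" using assms(1) by (intro mult_right_mono) auto
  finally have "2 * sqrt 2 / real L ^ n < real m * sqrt (2 * exp 1) / real L ^ n"
    using assms(3) by (intro divide_strict_right_mono) simp_all
  also have "\<dots> = sqrt (2 * exp 1) * real m * real L powr (- real m / 2)"
    unfolding exponent powr_minus using assms(3) by (simp add: powr_realpow divide_inverse)
  finally show ?thesis .
qed

theorem mainTheorem3:
  fixes m L :: nat
  assumes "m \<ge> 2" and "even m" and "L \<ge> 2"
  shows "D_a_L m (E_hsc m) L < sqrt (2 * exp 1) * real m * real L powr (- real m / 2)"
proof -
  obtain n where m: "m = n + n" using assms(2) by (metis evenE mult_2)
  have n1: "n \<ge> 1" using assms(1) m by simp
  define z where "z = (\<Sum>k<n. real L ^ k *\<^sub>R E_hsc m k)"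
  have z0: "z \<noteq> 0"
    unfolding z_def m using n1 assms(3) by (intro E_hsc_weighted_sum_nonzero) auto
  define h where "h = 4 * norm z / real L ^ n"
  have h0: "h \<noteq> 0" unfolding h_def using z0 assms(3) by simp
  have "D_a_L m (E_hsc m) L \<le> 2 * sqrt 2 / real L ^ n"
  proof (rule D_a_L_le)
    show "left_inverse m (pair_inverse n (\<lambda>k. real L ^ k) z) (E_hsc m)"
      unfolding m using E_hsc_shift[OF n1] z_def[unfolded m] z0 by (rule pair_inverse_left_inverse)
    show "\<exists>q\<in>{..<m} \<rightarrow>\<^sub>E centered_alphabet L h.
            norm (x - mat_vec m (pair_inverse n (\<lambda>k. real L ^ k) z) q) \<le> 2 * sqrt 2 / real L ^ n"
      if "x \<in> cball 0 1" for x
      using pair_inverse_covers_ball[OF n1 assms(3) z0] that unfolding m h_def by simp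
  qed (use centered_alphabet_card[OF h0] assms(3) in simp_all)
  also have "\<dots> < sqrt (2 * exp 1) * real m * real L powr (- real m / 2)"
    using assms(1,3) m by (intro covering_radius_below_target) simp_all
  finally show ?thesis .
qed

end
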